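(* Let $\mathcal{A}=\{H_1,\dots,H_n\}$ be an essential arrangement in $K^l$. Then $\mathcal{I}(\bar{\mathcal{A}})$ determines $L(\mathcal{A})$, and vice versa.
   Context: Let $K$ be a field and let $\mathcal{A}=\{H_1,\dots,H_n\}$ be an affine arrangement of $n$ distinct, linearly ordered hyperplanes in $K^l$. The lattice of intersections is $L(\mathcal{A})=\{\bigcap_{H\in\mathcal{B}}H \mid \mathcal{B}\subseteq\mathcal{A}\}$ (the empty intersection being $K^l$), partially ordered by reverse inclusion and ranked by codimension. $\mathcal{A}$ is called essential if $L(\mathcal{A})$ contains an element of rank $l$, i.e. some intersection of hyperplanes of $\mathcal{A}$ is a point. The coning $c\mathcal{A}=\{\tilde H_1,\dots,\tilde H_{n+1}\}$ is a central arrangement in $K^{l+1}$, where $\tilde H_{n+1}$ corresponds to the hyperplane at infinity $H_\infty$; $\bar{\mathcal{A}}=\{\bar H_1,\dots,\bar H_{n+1}\}$ denotes the projectivization of $c\mathcal{A}$ in $K\mathbb{P}^l$ (so $\bar H_{n+1}=\bar H_\infty$). With $[n+1]=\{1,\dots,n+1\}$ and $[n+1]^{l+1}_<=\{(i_1,\dots,i_{l+1})\in[n+1]^{l+1} \mid i_1<\cdots<i_{l+1}\}$, define $\mathcal{I}(\bar{\mathcal{A}})=\{(i_1,\dots,i_{l+1})\in[n+1]^{l+1}_< \mid \bar H_{i_1}\cap\cdots\cap\bar H_{i_{l+1}}\neq\emptyset\}$. *)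

theory Defs
  imports "HOL-Analysis.Finite_Cartesian_Product"
begin

text \<open>Affine hyperplane {x in K^l. a . x = b} in K^l = 'a^'n (l = CARD('n)).\<close>
definition dotp :: "'a::field ^ 'n \<Rightarrow> 'a ^ 'n \<Rightarrow> 'a" where
  "dotp a x = (\<Sum>i\<in>UNIV. a $ i * x $ i)"

definition hyp :: "'a::field ^ 'n \<Rightarrow> 'a \<Rightarrow> ('a ^ 'n) set" where
  "hyp a c = {x. dotp a x = c}"

definition arrangement :: "nat \<Rightarrow> (nat \<Rightarrow> 'a::field ^ 'n) \<Rightarrow> (nat \<Rightarrow> 'a) \<Rightarrow> bool" where
  "arrangement n a c \<longleftrightarrow>
     (\<forall>i\<in>{1..n}. a i \<noteq> 0) \<and>
     (\<forall>i\<in>{1..n}. \<forall>j\<in>{1..n}. i \<noteq> j \<longrightarrow> hyp (a i) (c i) \<noteq> hyp (a j) (c j))"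

text \<open>Intersection of the hyperplanes indexed by B (empty intersection = K^l).\<close>
definition isect :: "(nat \<Rightarrow> 'a::field ^ 'n) \<Rightarrow> (nat \<Rightarrow> 'a) \<Rightarrow> nat set \<Rightarrow> ('a ^ 'n) set" where
  "isect a c B = (\<Inter>i\<in>B. hyp (a i) (c i))"

definition LA :: "nat \<Rightarrow> (nat \<Rightarrow> 'a::field ^ 'n) \<Rightarrow> (nat \<Rightarrow> 'a) \<Rightarrow> ('a ^ 'n) set set" where
  "LA n a c = isect a c ` Pow {1..n}"

text \<open>Essential: some intersection is a point (an element of rank l).\<close>
definition essential :: "nat \<Rightarrow> (nat \<Rightarrow> 'a::field ^ 'n) \<Rightarrow> (nat \<Rightarrow> 'a) \<Rightarrow> bool" where
  "essential n a c \<longleftrightarrow> (\<exists>X\<in>LA n a c. \<exists>p. X = {p})"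

text \<open>Coning: in K^{l+1} = K^l x K (homogenizing coordinate t), cH_i = {(x,t). a_i . x = c_i t}
  for i \<le> n, and cH_{n+1} = {(x,t). t = 0} (hyperplane at infinity).\<close>
definition coneH :: "nat \<Rightarrow> (nat \<Rightarrow> 'a::field ^ 'n) \<Rightarrow> (nat \<Rightarrow> 'a) \<Rightarrow> nat \<Rightarrow> (('a ^ 'n) \<times> 'a) set" where
  "coneH n a c i = (if i = n + 1 then {(x, t). t = 0} else {(x, t). dotp (a i) x = c i * t})"

text \<open>Projective intersection of the bar H_i, i in S, is nonempty iff the cone hyperplanes
  share a nonzero vector.\<close>
definition proj_meet :: "nat \<Rightarrow> (nat \<Rightarrow> 'a::field ^ 'n) \<Rightarrow> (nat \<Rightarrow> 'a) \<Rightarrow> nat set \<Rightarrow> bool" where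
  "proj_meet n a c S \<longleftrightarrow> (\<exists>x t. (x, t) \<noteq> (0, 0) \<and> (\<forall>i\<in>S. (x, t) \<in> coneH n a c i))"

definition Iset :: "nat \<Rightarrow> (nat \<Rightarrow> 'a::field ^ 'n) \<Rightarrow> (nat \<Rightarrow> 'a) \<Rightarrow> nat list set" where
  "Iset n a c = {xs. length xs = CARD('n) + 1 \<and> sorted_wrt (<) xs \<and> set xs \<subseteq> {1..n+1}
                      \<and> proj_meet n a c (set xs)}"

text \<open>Two arrangements (same number of hyperplanes, same labelling) have the same labelled
  intersection lattice: the map B \<mapsto> \<Inter>_{i\<in>B} H_i induces the same order (reverse inclusion)
  and the same empty intersections.\<close>
definition same_lattice ::
  "nat \<Rightarrow> (nat \<Rightarrow> 'a::field ^ 'n) \<Rightarrow> (nat \<Rightarrow> 'a) \<Rightarrow> (nat \<Rightarrow> 'a ^ 'n) \<Rightarrow> (nat \<Rightarrow> 'a) \<Rightarrow> bool" where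
  "same_lattice n a c a' c' \<longleftrightarrow>
     (\<forall>B\<subseteq>{1..n}. \<forall>C\<subseteq>{1..n}.
        (isect a c B \<subseteq> isect a c C \<longleftrightarrow> isect a' c' B \<subseteq> isect a' c' C) \<and>
        (isect a c B = {} \<longleftrightarrow> isect a' c' B = {}))"

end

theory Submission
  imports Defs "HOL-Analysis.Cartesian_Space" "HOL-Library.Cardinality"
begin

text \<open>Homogenise: the hyperplane H_i = {x. a_i . x = c_i} becomes the vector
  w_i = (a_i, -c_i) in K^(l+1), and the hyperplane at infinity becomes w_inf = (0, 1). The
  projective hyperplanes indexed by an (l+1)-set T meet iff the w_i, i in T, fail to span
  K^(l+1), so I(bar A) is the complement of the set of bases of the configuration w, which spans
  because A is essential. On the affine side, the intersection of the H_i, i in B, lies in H_j iff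
  w_inf or w_j lies in the span of w_B, and it is empty iff w_inf does. Bases determine the
  independent sets and hence all span memberships. Conversely, T is a basis iff w_inf lies in
  the span of w_T and T contains l vectors that are independent together with w_inf, and this
  last independence is a condition on span memberships of the kind above.\<close>

section \<open>Linear functionals on K^m\<close>

lemma dotp_add_left: "dotp (u + v) x = dotp u x + dotp v x"
  by (simp add: dotp_def sum.distrib algebra_simps)

lemma dotp_scale_left: "dotp (r *s u) x = r * dotp u x"
  by (simp add: dotp_def sum_distrib_left algebra_simps)

lemma dotp_add_right: "dotp u (x + y) = dotp u x + dotp u y"
  by (simp add: dotp_def sum.distrib algebra_simps)

lemma dotp_scale_right: "dotp u (r *s x) = r * dotp u x"
  by (simp add: dotp_def sum_distrib_left algebra_simps)

lemma dotp_zero_left [simp]: "dotp 0 x = 0"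
  by (simp add: dotp_def)

lemma dotp_zero_right [simp]: "dotp u 0 = 0"
  by (simp add: dotp_def)

lemma dotp_axis_left: "dotp (axis k 1) x = x $ k"
  unfolding dotp_def axis_def by (simp add: if_distrib[of "\<lambda>r. r * _"] cong: if_cong)

lemma eq_0_if_dotp_eq_0: "(\<And>u. dotp u x = 0) \<Longrightarrow> x = 0"
  by (metis dotp_axis_left vec_eq_iff zero_index)

lemma dotp_eq_0_on_span:
  assumes "\<forall>u\<in>W. dotp u x = 0" and "u \<in> vec.span W"
  shows "dotp u x = 0"
proof -
  have "vec.subspace {u. dotp u x = 0}"
    by (auto simp: vec.subspace_def dotp_add_left dotp_scale_left)
  then have "vec.span W \<subseteq> {u. dotp u x = 0}"
    using assms(1) by (intro vec.span_minimal) auto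
  then show ?thesis using assms(2) by blast
qed

lemma linear_functional_eq_dotp:
  fixes f :: "'a::field ^ 'm \<Rightarrow> 'a"
  assumes "Vector_Spaces.linear (*s) (*) f"
  shows "f x = dotp x (\<chi> i. f (axis i 1))"
proof -
  interpret f: Vector_Spaces.linear "(*s)" "(*)" f by (rule assms)
  have "f x = f (\<Sum>i\<in>UNIV. x $ i *s axis i 1)" by (simp add: basis_expansion)
  also have "\<dots> = (\<Sum>i\<in>UNIV. x $ i * f (axis i 1))" by (simp add: f.sum f.scale)
  finally show ?thesis by (simp add: dotp_def)
qed

lemma exists_separating_dotp:
  fixes v :: "'a::field ^ 'm"
  assumes "v \<notin> vec.span W"
  obtains y where "\<forall>u\<in>W. dotp u y = 0" and "dotp v y \<noteq> 0"
proof -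
  obtain B where B: "B \<subseteq> vec.span W" "vec.independent B" "vec.span W \<subseteq> vec.span B"
    using vec.maximal_independent_subset[of "vec.span W"] by blast
  have "vec.span B \<subseteq> vec.span W" using B(1) by (simp add: vec.span_minimal)
  then have v: "v \<notin> vec.span B" using assms by blast
  then have "vec.independent (insert v B)" using B(2) by (rule vec.independent_insertI)
  then obtain K where K: "insert v B \<subseteq> K" "vec.independent K" "UNIV \<subseteq> vec.span K"
    using vec.maximal_independent_subset_extend[OF subset_UNIV] by metis
  \<comment> \<open>the coordinate along v in a basis extending one of span W separates v from W\<close>
  define f where "f u = vec.representation K u v" for u
  define y where "y = (\<chi> i. f (axis i 1))"
  have f_dotp: "f u = dotp u y" for u
    unfolding y_def f_def using K by (intro linear_functional_eq_dotp vec.linear_representation) auto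
  have "f b = 0" if "b \<in> B" for b
  proof -
    have "b \<noteq> v" using that v vec.span_base by blast
    then show ?thesis using K that by (auto simp: f_def vec.representation_basis)
  qed
  then have "\<forall>u\<in>W. dotp u y = 0"
    using B(3) vec.span_superset dotp_eq_0_on_span[of B y] by (force simp: f_dotp)
  moreover have "dotp v y = 1" using K by (simp add: f_dotp[symmetric] f_def vec.representation_basis)
  ultimately show thesis using that by simp
qed

lemma exists_separating_dotp2:
  fixes u v :: "'a::field ^ 'm"
  assumes "u \<notin> vec.span W" and "v \<notin> vec.span W"
  obtains y where "\<forall>x\<in>W. dotp x y = 0" and "dotp u y \<noteq> 0" and "dotp v y \<noteq> 0"
proof -
  obtain y1 where y1: "\<forall>x\<in>W. dotp x y1 = 0" "dotp u y1 \<noteq> 0"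
    using exists_separating_dotp[OF assms(1)] by blast
  obtain y2 where y2: "\<forall>x\<in>W. dotp x y2 = 0" "dotp v y2 \<noteq> 0"
    using exists_separating_dotp[OF assms(2)] by blast
  consider "dotp v y1 \<noteq> 0" | "dotp u y2 \<noteq> 0" | "dotp v y1 = 0" "dotp u y2 = 0" by blast
  then show thesis
  proof cases
    case 1 then show thesis using that y1 by blast
next
    case 2 then show thesis using that y2 by blast
next
    case 3 then show thesis using that[of "y1 + y2"] y1 y2 by (simp add: dotp_add_right)
  qed
qed

section \<open>Linearly independent families\<close>

definition indep_family :: "('i \<Rightarrow> 'a::field ^ 'm) \<Rightarrow> 'i set \<Rightarrow> bool" where
  "indep_family w I \<longleftrightarrow> inj_on w I \<and> vec.independent (w ` I)"

lemma indep_family_empty [simp]: "indep_family w {}"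
  by (simp add: indep_family_def vec.independent_empty)

lemma indep_family_subset: "indep_family w I \<Longrightarrow> J \<subseteq> I \<Longrightarrow> indep_family w J"
  unfolding indep_family_def by (meson image_mono inj_on_subset vec.independent_mono)

lemma indep_family_insert:
  assumes "b \<notin> I"
  shows "indep_family w (insert b I) \<longleftrightarrow> indep_family w I \<and> w b \<notin> vec.span (w ` I)"
  using assms vec.span_base[of "w b" "w ` I"]
  by (auto simp: indep_family_def vec.independent_insert)

lemma indep_family_iff: "indep_family w I \<longleftrightarrow> (\<forall>i\<in>I. w i \<notin> vec.span (w ` (I - {i})))"
proof
  assume ind: "indep_family w I"
  show "\<forall>i\<in>I. w i \<notin> vec.span (w ` (I - {i}))"
  proof
    fix i assume "i \<in> I"
    then have "indep_family w (insert i (I - {i}))" using ind by (simp add: insert_absorb)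
    then show "w i \<notin> vec.span (w ` (I - {i}))" using indep_family_insert[of i "I - {i}" w] by simp
  qed
next
  assume H: "\<forall>i\<in>I. w i \<notin> vec.span (w ` (I - {i}))"
  have "inj_on w I"
  proof (rule inj_onI, rule ccontr)
    fix i j assume "i \<in> I" "j \<in> I" "w i = w j" "i \<noteq> j"
    then have "w i \<in> vec.span (w ` (I - {i}))" by (auto intro: vec.span_base)
    with H \<open>i \<in> I\<close> show False by blast
  qed
  moreover have "vec.independent (w ` I)"
    unfolding vec.dependent_def
  proof clarsimp
    fix i assume "i \<in> I" "w i \<in> vec.span (w ` I - {w i})"
    moreover have "w ` I - {w i} \<subseteq> w ` (I - {i})" by auto
    ultimately show False using H vec.span_mono by blast
  qed
  ultimately show "indep_family w I" by (simp add: indep_family_def)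
qed

lemma indep_family_extend:
  assumes "indep_family w J" and "J \<subseteq> E"
  obtains I where "J \<subseteq> I" "I \<subseteq> E" "indep_family w I" "vec.span (w ` E) = vec.span (w ` I)"
proof -
  obtain K where K: "w ` J \<subseteq> K" "K \<subseteq> w ` E" "vec.independent K" "w ` E \<subseteq> vec.span K"
    using vec.maximal_independent_subset_extend[of "w ` J" "w ` E"] assms
    by (auto simp: indep_family_def)
  define g where "g = inv_into E w"
  have g: "g k \<in> E" "w (g k) = k" if "k \<in> K" for k
    using that K(2) by (auto simp: g_def inv_into_into f_inv_into_f)
  define I where "I = J \<union> g ` (K - w ` J)"
  have "K \<subseteq> w ` I"
  proof
    fix k assume "k \<in> K"
    show "k \<in> w ` I"
    proof (cases "k \<in> w ` J")
      case False
      then have "g k \<in> I" using \<open>k \<in> K\<close> by (auto simp: I_def)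
      then show ?thesis using g(2)[OF \<open>k \<in> K\<close>] by (metis image_eqI)
    qed (auto simp: I_def)
  qed
  moreover have "w ` I \<subseteq> K" using K(1) g by (auto simp: I_def)
  ultimately have wI: "w ` I = K" by blast
  have "inj_on w (g ` (K - w ` J))" using g by (auto simp: inj_on_def)
  then have "inj_on w I"
    using assms(1) g by (auto simp: I_def indep_family_def inj_on_Un image_image)
  moreover have "vec.span (w ` E) = vec.span K"
    using K(2,4) by (metis subset_antisym vec.span_mono vec.span_span)
  ultimately show thesis
    using that[of I] assms(2) g K(3) wI by (auto simp: I_def indep_family_def)
qed

lemma card_indep_family_spanning:
  fixes w :: "'i \<Rightarrow> 'a::field ^ 'm"
  assumes "indep_family w I" and "vec.span (w ` I) = UNIV"
  shows "card I = CARD('m)"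
proof -
  have "card (w ` I) = vec.dim (UNIV :: ('a ^ 'm) set)"
    using assms by (intro vec.basis_card_eq_dim) (auto simp: indep_family_def)
  then show ?thesis using assms(1) by (simp add: indep_family_def card_image card_cart_basis)
qed

lemma spanning_iff_indep_family:
  fixes w :: "'i \<Rightarrow> 'a::field ^ 'm"
  assumes "finite T" and "card T = CARD('m)"
  shows "vec.span (w ` T) = UNIV \<longleftrightarrow> indep_family w T"
proof
  assume spanning: "vec.span (w ` T) = UNIV"
  have "CARD('m) \<le> card (w ` T)"
    using vec.dim_le_card[of UNIV "w ` T"] spanning assms(1) by (simp add: card_cart_basis)
  moreover have "card (w ` T) \<le> card T" using assms(1) by (rule card_image_le)
  ultimately have card_eq: "card (w ` T) = card T" using assms(2) by simp
  then have "inj_on w T" using assms(1) by (simp add: eq_card_imp_inj_on)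
  moreover have "vec.independent (w ` T)"
    using vec.card_eq_dim[of "w ` T" UNIV] spanning card_eq assms by (simp add: card_cart_basis)
  ultimately show "indep_family w T" by (simp add: indep_family_def)
next
  assume "indep_family w T"
  then show "vec.span (w ` T) = UNIV"
    using vec.card_eq_dim[of "w ` T" UNIV] assms
    by (auto simp: indep_family_def card_image card_cart_basis)
qed

lemma indep_family_iff_subset_spanning:
  fixes w :: "'i \<Rightarrow> 'a::field ^ 'm"
  assumes "finite E" and "vec.span (w ` E) = UNIV" and "J \<subseteq> E"
  shows "indep_family w J \<longleftrightarrow>
    (\<exists>S. J \<subseteq> S \<and> S \<subseteq> E \<and> card S = CARD('m) \<and> vec.span (w ` S) = UNIV)"
proof
  assume "indep_family w J"
  then obtain S where "J \<subseteq> S" "S \<subseteq> E" "indep_family w S" "vec.span (w ` E) = vec.span (w ` S)"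
    using assms(3) by (rule indep_family_extend)
  then show "\<exists>S. J \<subseteq> S \<and> S \<subseteq> E \<and> card S = CARD('m) \<and> vec.span (w ` S) = UNIV"
    using assms(2) card_indep_family_spanning by metis
next
  assume "\<exists>S. J \<subseteq> S \<and> S \<subseteq> E \<and> card S = CARD('m) \<and> vec.span (w ` S) = UNIV"
  then obtain S where "J \<subseteq> S" "S \<subseteq> E" "card S = CARD('m)" "vec.span (w ` S) = UNIV" by blast
  then show "indep_family w J"
    using spanning_iff_indep_family[of S w] assms(1) finite_subset indep_family_subset by metis
qed

lemma in_span_iff_indep_family:
  "w j \<in> vec.span (w ` B) \<longleftrightarrow>
    j \<in> B \<or> (\<exists>I\<subseteq>B. indep_family w I \<and> \<not> indep_family w (insert j I))"
proof
  assume j: "w j \<in> vec.span (w ` B)"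
  show "j \<in> B \<or> (\<exists>I\<subseteq>B. indep_family w I \<and> \<not> indep_family w (insert j I))"
  proof (cases "j \<in> B")
    case False
    obtain I where I: "I \<subseteq> B" "indep_family w I" "vec.span (w ` B) = vec.span (w ` I)"
      using indep_family_extend[of w "{}" B] by auto
    have "j \<notin> I" using I(1) False by blast
    then have "\<not> indep_family w (insert j I)"
      using j I(3) by (simp add: indep_family_insert)
    then show ?thesis using I by blast
  qed simp
next
  assume "j \<in> B \<or> (\<exists>I\<subseteq>B. indep_family w I \<and> \<not> indep_family w (insert j I))"
  then show "w j \<in> vec.span (w ` B)"
  proof
    assume "\<exists>I\<subseteq>B. indep_family w I \<and> \<not> indep_family w (insert j I)"
    then obtain I where I: "I \<subseteq> B" "indep_family w I" "\<not> indep_family w (insert j I)" by blast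
    then have "j \<notin> I" by (metis insert_absorb)
    then have "w j \<in> vec.span (w ` I)" using I(2,3) by (simp add: indep_family_insert)
    then show ?thesis using I(1) vec.span_mono[of "w ` I" "w ` B"] by blast
  qed (rule vec.span_base, simp)
qed

lemma spanning_iff_indep_insert:
  fixes w :: "'i \<Rightarrow> 'a::field ^ 'm"
  assumes "finite T" and "w p \<noteq> 0"
  shows "vec.span (w ` T) = UNIV \<longleftrightarrow>
    (\<exists>I\<subseteq>T - {p}. card I = CARD('m) - 1 \<and> indep_family w (insert p I)) \<and>
    w p \<in> vec.span (w ` T)"
proof
  assume spanning: "vec.span (w ` T) = UNIV"
  have "indep_family w {p}" using assms(2) by (simp add: indep_family_def)
  then obtain I' where I': "{p} \<subseteq> I'" "I' \<subseteq> insert p T" "indep_family w I'"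
      "vec.span (w ` insert p T) = vec.span (w ` I')"
    by (rule indep_family_extend[of w "{p}" "insert p T"]) auto
  have "vec.span (w ` I') = UNIV"
    using spanning I'(4) vec.span_mono[of "w ` T" "w ` insert p T"] by auto
  then have "card I' = CARD('m)" by (rule card_indep_family_spanning[OF I'(3)])
  moreover have "finite I'" using I'(2) assms(1) finite_subset by blast
  ultimately have "I' - {p} \<subseteq> T - {p} \<and> card (I' - {p}) = CARD('m) - 1 \<and>
      indep_family w (insert p (I' - {p}))"
    using I' by (auto simp: insert_absorb)
  then show "(\<exists>I\<subseteq>T - {p}. card I = CARD('m) - 1 \<and> indep_family w (insert p I)) \<and>
      w p \<in> vec.span (w ` T)"
    using spanning by blast
next
  assume "(\<exists>I\<subseteq>T - {p}. card I = CARD('m) - 1 \<and> indep_family w (insert p I)) \<and>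
      w p \<in> vec.span (w ` T)"
  then obtain I where I: "I \<subseteq> T - {p}" "card I = CARD('m) - 1" "indep_family w (insert p I)"
    and p: "w p \<in> vec.span (w ` T)" by blast
  have "finite I" using I(1) assms(1) finite_subset by blast
  moreover have "p \<notin> I" using I(1) by blast
  ultimately have "card (insert p I) = CARD('m)" using I(2) by simp
  then have "vec.span (w ` insert p I) = UNIV"
    using spanning_iff_indep_family[of "insert p I" w] \<open>finite I\<close> I(3) by simp
  moreover have "w ` insert p I \<subseteq> vec.span (w ` T)" using I(1) p by (auto intro: vec.span_base)
  ultimately show "vec.span (w ` T) = UNIV"
    by (metis top.extremum_unique vec.span_minimal vec.subspace_span)
qed

text \<open>In the application \<open>w p\<close> is the normal of the hyperplane at infinity, and \<open>entails w p B j\<close>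
  says that the affine system of equations \<open>B\<close> is inconsistent or implies equation \<open>j\<close>.\<close>

definition entails :: "('i \<Rightarrow> 'a::field ^ 'm) \<Rightarrow> 'i \<Rightarrow> 'i set \<Rightarrow> 'i \<Rightarrow> bool" where
  "entails w p B j \<longleftrightarrow> w p \<in> vec.span (w ` B) \<or> w j \<in> vec.span (w ` B)"

lemma entails_self [simp]: "entails w p B p \<longleftrightarrow> w p \<in> vec.span (w ` B)"
  by (simp add: entails_def)

lemma indep_family_insert_iff_entails:
  assumes "p \<notin> I"
  shows "indep_family w (insert p I) \<longleftrightarrow>
    \<not> entails w p I p \<and> (\<forall>i\<in>I. \<not> entails w p (I - {i}) i)"
proof -
  have "w p \<notin> vec.span (w ` (I - {i}))" if "w p \<notin> vec.span (w ` I)" for i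
    using that vec.span_mono[of "w ` (I - {i})" "w ` I"] by blast
  then show ?thesis
    unfolding indep_family_insert[OF assms] indep_family_iff[of w I] entails_def by blast
qed

lemma in_span_eq_if_spanning_eq:
  fixes w w' :: "'i \<Rightarrow> 'a::field ^ 'm"
  assumes "finite E" and "vec.span (w ` E) = UNIV" and "vec.span (w' ` E) = UNIV"
    and spanning_eq:
      "\<forall>T\<subseteq>E. card T = CARD('m) \<longrightarrow> (vec.span (w ` T) = UNIV \<longleftrightarrow> vec.span (w' ` T) = UNIV)"
    and "B \<subseteq> E" and "j \<in> E"
  shows "w j \<in> vec.span (w ` B) \<longleftrightarrow> w' j \<in> vec.span (w' ` B)"
proof -
  have indep_eq: "indep_family w I \<longleftrightarrow> indep_family w' I" if "I \<subseteq> E" for I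
    using indep_family_iff_subset_spanning[OF assms(1,2) that]
      indep_family_iff_subset_spanning[OF assms(1,3) that] spanning_eq
    by (meson order_trans)
  have "indep_family w I \<and> \<not> indep_family w (insert j I) \<longleftrightarrow>
      indep_family w' I \<and> \<not> indep_family w' (insert j I)" if "I \<subseteq> B" for I
    using that assms(5,6) indep_eq[of I] indep_eq[of "insert j I"] by auto
  then show ?thesis unfolding in_span_iff_indep_family by blast
qed

lemma spanning_eq_if_entails_eq:
  fixes w w' :: "'i \<Rightarrow> 'a::field ^ 'm"
  assumes "finite T" and "T \<subseteq> E" and "p \<in> E" and "w p \<noteq> 0" and "w' p \<noteq> 0"
    and entails_eq: "\<forall>B\<subseteq>E - {p}. \<forall>j\<in>E. entails w p B j \<longleftrightarrow> entails w' p B j"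
  shows "vec.span (w ` T) = UNIV \<longleftrightarrow> vec.span (w' ` T) = UNIV"
proof -
  have indep_eq: "indep_family w (insert p I) \<longleftrightarrow> indep_family w' (insert p I)"
    if "I \<subseteq> T - {p}" for I
  proof -
    have same: "entails w p B j \<longleftrightarrow> entails w' p B j" if "B \<subseteq> I" "j \<in> insert p I" for B j
    proof -
      have "B \<subseteq> E - {p}" using that(1) \<open>I \<subseteq> T - {p}\<close> assms(2) by blast
      moreover have "j \<in> E" using that(2) \<open>I \<subseteq> T - {p}\<close> assms(2,3) by blast
      ultimately show ?thesis using entails_eq by blast
    qed
    have "p \<notin> I" using that by blast
    then show ?thesis
      unfolding indep_family_insert_iff_entails[OF \<open>p \<notin> I\<close>] using same by blast
  qed
  have p_eq: "w p \<in> vec.span (w ` T) \<longleftrightarrow> w' p \<in> vec.span (w' ` T)"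
  proof (cases "p \<in> T")
    case True then show ?thesis by (simp add: vec.span_base)
next
    case False
    then have "T \<subseteq> E - {p}" using assms(2) by auto
    then show ?thesis using entails_eq assms(3) by (auto simp: entails_def)
  qed
  have "(\<exists>I\<subseteq>T - {p}. card I = CARD('m) - 1 \<and> indep_family w (insert p I)) \<longleftrightarrow>
      (\<exists>I\<subseteq>T - {p}. card I = CARD('m) - 1 \<and> indep_family w' (insert p I))"
    using indep_eq by blast
  then show ?thesis
    unfolding spanning_iff_indep_insert[of T w p, OF assms(1,4)] spanning_iff_indep_insert[of T w' p, OF assms(1,5)]
    using p_eq by (simp only:)
qed

lemma spanning_eq_iff_entails_eq:
  fixes w w' :: "'i \<Rightarrow> 'a::field ^ 'm"
  assumes "finite E" and "p \<in> E" and "w p \<noteq> 0" and "w' p \<noteq> 0"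
    and "vec.span (w ` E) = UNIV" and "vec.span (w' ` E) = UNIV"
  shows "(\<forall>T\<subseteq>E. card T = CARD('m) \<longrightarrow> (vec.span (w ` T) = UNIV \<longleftrightarrow> vec.span (w' ` T) = UNIV))
    \<longleftrightarrow> (\<forall>B\<subseteq>E - {p}. \<forall>j\<in>E. entails w p B j \<longleftrightarrow> entails w' p B j)"
proof
  assume "\<forall>T\<subseteq>E. card T = CARD('m) \<longrightarrow> (vec.span (w ` T) = UNIV \<longleftrightarrow> vec.span (w' ` T) = UNIV)"
  then have "w j \<in> vec.span (w ` B) \<longleftrightarrow> w' j \<in> vec.span (w' ` B)" if "B \<subseteq> E" "j \<in> E" for B j
    using in_span_eq_if_spanning_eq[OF assms(1,5,6)] that by blast
  then show "\<forall>B\<subseteq>E - {p}. \<forall>j\<in>E. entails w p B j \<longleftrightarrow> entails w' p B j"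
    using assms(2) by (auto simp: entails_def)
next
  assume entails_eq: "\<forall>B\<subseteq>E - {p}. \<forall>j\<in>E. entails w p B j \<longleftrightarrow> entails w' p B j"
  show "\<forall>T\<subseteq>E. card T = CARD('m) \<longrightarrow> (vec.span (w ` T) = UNIV \<longleftrightarrow> vec.span (w' ` T) = UNIV)"
  proof (intro allI impI)
    fix T assume "T \<subseteq> E"
    then have "finite T" using assms(1) finite_subset by blast
    from this \<open>T \<subseteq> E\<close> assms(2-4) entails_eq
    show "vec.span (w ` T) = UNIV \<longleftrightarrow> vec.span (w' ` T) = UNIV"
      by (rule spanning_eq_if_entails_eq)
  qed
qed

section \<open>Homogenisation of an affine arrangement\<close>

lemma sum_UNIV_option:
  fixes f :: "'n::finite option \<Rightarrow> 'b::comm_monoid_add"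
  shows "(\<Sum>k\<in>UNIV. f k) = f None + (\<Sum>j\<in>UNIV. f (Some j))"
proof -
  have "(\<Sum>k\<in>UNIV. f k) = (\<Sum>k\<in>insert None (range Some). f k)" by (simp add: UNIV_option_conv)
  also have "\<dots> = f None + (\<Sum>k\<in>range Some. f k)" by (subst sum.insert) auto
  also have "(\<Sum>k\<in>range Some. f k) = (\<Sum>j\<in>UNIV. f (Some j))" by (simp add: sum.reindex)
  finally show ?thesis .
qed

definition homog :: "'a ^ 'n \<Rightarrow> 'a \<Rightarrow> 'a ^ 'n option" where
  "homog x t = (\<chi> k. case k of None \<Rightarrow> t | Some j \<Rightarrow> x $ j)"

lemma homog_cases:
  obtains x t where "z = homog x t"
proof
  show "z = homog (\<chi> j. z $ Some j) (z $ None)"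
    by (simp add: homog_def vec_eq_iff split: option.split)
qed

lemma homog_eq_0_iff [simp]: "homog x t = 0 \<longleftrightarrow> x = 0 \<and> t = 0"
  by (auto simp: homog_def vec_eq_iff split: option.splits)

lemma scale_homog: "r *s homog x t = homog (r *s x) (r * t)"
  by (simp add: homog_def vec_eq_iff split: option.split)

lemma dotp_homog: "dotp (homog u s) (homog x t) = dotp u x + s * t"
  by (simp add: dotp_def homog_def sum_UNIV_option)

definition cone_normal :: "nat \<Rightarrow> (nat \<Rightarrow> 'a::field ^ 'n) \<Rightarrow> (nat \<Rightarrow> 'a) \<Rightarrow> nat \<Rightarrow> 'a ^ 'n option"
  where "cone_normal n a c i = (if i = n + 1 then homog 0 1 else homog (a i) (- c i))"

lemma cone_normal_infinity_neq_0: "cone_normal n a c (n + 1) \<noteq> 0"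
  by (simp add: cone_normal_def)

lemma dotp_cone_normal:
  "dotp (cone_normal n a c i) (homog x t) = (if i = n + 1 then t else dotp (a i) x - c i * t)"
  by (simp add: cone_normal_def dotp_homog)

lemma mem_coneH_iff: "(x, t) \<in> coneH n a c i \<longleftrightarrow> dotp (cone_normal n a c i) (homog x t) = 0"
  by (simp add: coneH_def dotp_cone_normal)

lemma mem_hyp_iff:
  "j \<noteq> n + 1 \<Longrightarrow> x \<in> hyp (a j) (c j) \<longleftrightarrow> dotp (cone_normal n a c j) (homog x 1) = 0"
  by (simp add: hyp_def dotp_cone_normal)

lemma mem_isect_iff:
  assumes "n + 1 \<notin> B"
  shows "x \<in> isect a c B \<longleftrightarrow> (\<forall>i\<in>B. dotp (cone_normal n a c i) (homog x 1) = 0)"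
proof -
  have "x \<in> hyp (a i) (c i) \<longleftrightarrow> dotp (cone_normal n a c i) (homog x 1) = 0" if "i \<in> B" for i
    using that assms by (intro mem_hyp_iff) blast
  then show ?thesis by (simp add: isect_def)
qed

lemma dotp_eq_0_on_span_isect:
  assumes "n + 1 \<notin> B" and "x \<in> isect a c B" and "u \<in> vec.span (cone_normal n a c ` B)"
  shows "dotp u (homog x 1) = 0"
proof -
  have "\<forall>v\<in>cone_normal n a c ` B. dotp v (homog x 1) = 0"
    using assms(1,2) by (simp add: mem_isect_iff)
  then show ?thesis using assms(3) by (rule dotp_eq_0_on_span)
qed

lemma isect_point_of_cone_vector:
  assumes "n + 1 \<notin> B" and "\<forall>u\<in>cone_normal n a c ` B. dotp u z = 0"
    and "dotp (cone_normal n a c (n + 1)) z \<noteq> 0"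
  obtains x where "x \<in> isect a c B"
    and "\<And>j. j \<noteq> n + 1 \<Longrightarrow> x \<in> hyp (a j) (c j) \<longleftrightarrow> dotp (cone_normal n a c j) z = 0"
proof -
  obtain y t where z: "z = homog y t" by (rule homog_cases)
  have "t \<noteq> 0" using assms(3) by (simp add: z dotp_cone_normal)
  then have "homog ((1 / t) *s y) 1 = (1 / t) *s z" by (simp add: z scale_homog)
  then have "dotp u (homog ((1 / t) *s y) 1) = 0 \<longleftrightarrow> dotp u z = 0" for u
    using \<open>t \<noteq> 0\<close> by (simp add: dotp_scale_right)
  moreover have "\<forall>i\<in>B. dotp (cone_normal n a c i) z = 0" using assms(2) by blast
  ultimately show thesis
    using that[of "(1 / t) *s y"] assms(1) by (simp add: mem_isect_iff mem_hyp_iff)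
qed

lemma isect_eq_empty_iff:
  assumes "B \<subseteq> {1..n}"
  shows "isect a c B = {} \<longleftrightarrow> cone_normal n a c (n + 1) \<in> vec.span (cone_normal n a c ` B)"
proof
  have nB: "n + 1 \<notin> B" using assms by auto
  assume empty: "isect a c B = {}"
  show "cone_normal n a c (n + 1) \<in> vec.span (cone_normal n a c ` B)"
  proof (rule ccontr)
    assume "cone_normal n a c (n + 1) \<notin> vec.span (cone_normal n a c ` B)"
    then obtain z where z: "\<forall>u\<in>cone_normal n a c ` B. dotp u z = 0"
      "dotp (cone_normal n a c (n + 1)) z \<noteq> 0"
      by (rule exists_separating_dotp)
    obtain x where "x \<in> isect a c B"
      using isect_point_of_cone_vector[OF nB z] by blast
    with empty show False by blast
  qed
next
  have nB: "n + 1 \<notin> B" using assms by auto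
  assume "cone_normal n a c (n + 1) \<in> vec.span (cone_normal n a c ` B)"
  then have "dotp (cone_normal n a c (n + 1)) (homog x 1) = 0" if "x \<in> isect a c B" for x
    using nB that by (rule dotp_eq_0_on_span_isect[rotated 2])
  then show "isect a c B = {}" by (force simp: dotp_cone_normal)
qed

lemma isect_subset_hyp_iff:
  assumes "B \<subseteq> {1..n}" and "j \<in> {1..n}"
  shows "isect a c B \<subseteq> hyp (a j) (c j) \<longleftrightarrow> entails (cone_normal n a c) (n + 1) B j"
proof
  assume sub: "isect a c B \<subseteq> hyp (a j) (c j)"
  have nB: "n + 1 \<notin> B" and j: "j \<noteq> n + 1" using assms by auto
  show "entails (cone_normal n a c) (n + 1) B j"
  proof (rule ccontr)
    assume "\<not> entails (cone_normal n a c) (n + 1) B j"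
    then have "cone_normal n a c (n + 1) \<notin> vec.span (cone_normal n a c ` B)"
      "cone_normal n a c j \<notin> vec.span (cone_normal n a c ` B)"
      by (auto simp: entails_def)
    then obtain z where z: "\<forall>u\<in>cone_normal n a c ` B. dotp u z = 0"
      "dotp (cone_normal n a c (n + 1)) z \<noteq> 0" "dotp (cone_normal n a c j) z \<noteq> 0"
      by (rule exists_separating_dotp2)
    obtain x where "x \<in> isect a c B" "x \<notin> hyp (a j) (c j)"
      using isect_point_of_cone_vector[OF nB z(1,2)] z(3) j by blast
    with sub show False by blast
  qed
next
  assume "entails (cone_normal n a c) (n + 1) B j"
  then consider "cone_normal n a c (n + 1) \<in> vec.span (cone_normal n a c ` B)"
    | "cone_normal n a c j \<in> vec.span (cone_normal n a c ` B)"
    unfolding entails_def by blast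
  then show "isect a c B \<subseteq> hyp (a j) (c j)"
  proof cases
    case 1
    then have "isect a c B = {}" using isect_eq_empty_iff[OF assms(1)] by blast
    then show ?thesis by simp
next
    case 2
    have "n + 1 \<notin> B" "j \<noteq> n + 1" using assms by auto
    then show ?thesis
      using 2 dotp_eq_0_on_span_isect[of n B _ a c] by (auto simp: mem_hyp_iff)
  qed
qed

lemma isect_subset_isect_iff:
  assumes "B \<subseteq> {1..n}" and "C \<subseteq> {1..n}"
  shows "isect a c B \<subseteq> isect a c C \<longleftrightarrow> (\<forall>j\<in>C. entails (cone_normal n a c) (n + 1) B j)"
proof -
  have "isect a c B \<subseteq> isect a c C \<longleftrightarrow> (\<forall>j\<in>C. isect a c B \<subseteq> hyp (a j) (c j))"
    by (simp add: isect_def[of a c C] le_INF_iff)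
  then show ?thesis using assms isect_subset_hyp_iff[OF assms(1)] by blast
qed

lemma same_lattice_iff_entails_eq:
  "same_lattice n a c a' c' \<longleftrightarrow>
    (\<forall>B\<subseteq>{1..n}. \<forall>j\<in>{1..n+1}.
      entails (cone_normal n a c) (n + 1) B j \<longleftrightarrow> entails (cone_normal n a' c') (n + 1) B j)"
proof
  assume same: "same_lattice n a c a' c'"
  show "\<forall>B\<subseteq>{1..n}. \<forall>j\<in>{1..n+1}.
    entails (cone_normal n a c) (n + 1) B j \<longleftrightarrow> entails (cone_normal n a' c') (n + 1) B j"
  proof (intro allI impI ballI)
    fix B j assume B: "B \<subseteq> {1..n}" and j: "j \<in> {1..n+1}"
    have same_B: "(isect a c B \<subseteq> isect a c C \<longleftrightarrow> isect a' c' B \<subseteq> isect a' c' C) \<and>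
        (isect a c B = {} \<longleftrightarrow> isect a' c' B = {})" if "C \<subseteq> {1..n}" for C
      using same B that unfolding same_lattice_def by blast
    show "entails (cone_normal n a c) (n + 1) B j \<longleftrightarrow> entails (cone_normal n a' c') (n + 1) B j"
    proof (cases "j = n + 1")
      case True
      then show ?thesis
        using same_B[of "{}"] isect_eq_empty_iff[OF B, of a c] isect_eq_empty_iff[OF B, of a' c']
        by simp
    next
      case False
      then have "{j} \<subseteq> {1..n}" using j by auto
      then show ?thesis
        using same_B isect_subset_isect_iff[OF B \<open>{j} \<subseteq> {1..n}\<close>, of a c]
          isect_subset_isect_iff[OF B \<open>{j} \<subseteq> {1..n}\<close>, of a' c']
        by simp
    qed
  qed
next
  assume entails_eq: "\<forall>B\<subseteq>{1..n}. \<forall>j\<in>{1..n+1}.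
    entails (cone_normal n a c) (n + 1) B j \<longleftrightarrow> entails (cone_normal n a' c') (n + 1) B j"
  show "same_lattice n a c a' c'"
    unfolding same_lattice_def
  proof (intro allI impI)
    fix B C assume B: "B \<subseteq> {1..n}" and C: "C \<subseteq> {1..n}"
    have "\<forall>j\<in>insert (n + 1) C.
        entails (cone_normal n a c) (n + 1) B j \<longleftrightarrow> entails (cone_normal n a' c') (n + 1) B j"
      using entails_eq B C by (auto simp del: entails_self)
    then show "(isect a c B \<subseteq> isect a c C \<longleftrightarrow> isect a' c' B \<subseteq> isect a' c' C) \<and>
        (isect a c B = {} \<longleftrightarrow> isect a' c' B = {})"
      unfolding isect_subset_isect_iff[OF B C] isect_eq_empty_iff[OF B] by auto
  qed
qed

lemma proj_meet_iff_not_spanning: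
  "proj_meet n a c S \<longleftrightarrow> vec.span (cone_normal n a c ` S) \<noteq> UNIV"
proof
  assume "proj_meet n a c S"
  then obtain x t where "(x, t) \<noteq> (0, 0)" "\<forall>i\<in>S. dotp (cone_normal n a c i) (homog x t) = 0"
    by (auto simp: proj_meet_def mem_coneH_iff)
  then have "homog x t \<noteq> 0" "\<forall>u\<in>vec.span (cone_normal n a c ` S). dotp u (homog x t) = 0"
    using dotp_eq_0_on_span[of "cone_normal n a c ` S" "homog x t"] by auto
  then show "vec.span (cone_normal n a c ` S) \<noteq> UNIV"
    using eq_0_if_dotp_eq_0[of "homog x t"] by (metis UNIV_I)
next
  assume "vec.span (cone_normal n a c ` S) \<noteq> UNIV"
  then obtain v where "v \<notin> vec.span (cone_normal n a c ` S)" by auto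
  then obtain z where z: "\<forall>i\<in>S. dotp (cone_normal n a c i) z = 0" "dotp v z \<noteq> 0"
    by (auto elim: exists_separating_dotp)
  obtain x t where "z = homog x t" by (rule homog_cases)
  moreover have "z \<noteq> 0" using z(2) by auto
  ultimately show "proj_meet n a c S" using z(1) by (auto simp: proj_meet_def mem_coneH_iff)
qed

lemma sorted_lists_eq_iff:
  fixes E :: "'b::linorder set"
  assumes "finite E"
  shows "{xs. length xs = k \<and> sorted_wrt (<) xs \<and> set xs \<subseteq> E \<and> P (set xs)} =
      {xs. length xs = k \<and> sorted_wrt (<) xs \<and> set xs \<subseteq> E \<and> Q (set xs)} \<longleftrightarrow>
    (\<forall>T\<subseteq>E. card T = k \<longrightarrow> (P T \<longleftrightarrow> Q T))"
proof
  assume eq: "{xs. length xs = k \<and> sorted_wrt (<) xs \<and> set xs \<subseteq> E \<and> P (set xs)} =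
      {xs. length xs = k \<and> sorted_wrt (<) xs \<and> set xs \<subseteq> E \<and> Q (set xs)}"
  show "\<forall>T\<subseteq>E. card T = k \<longrightarrow> (P T \<longleftrightarrow> Q T)"
  proof (intro allI impI)
    fix T assume T: "T \<subseteq> E" "card T = k"
    then have "finite T" using assms finite_subset by blast
    then obtain xs where "sorted_wrt (<) xs" "set xs = T" "length xs = card T"
      using finite_set_strict_sorted by metis
    then show "P T \<longleftrightarrow> Q T" using eq[THEN eqset_imp_iff, of xs] T by simp
  qed
next
  assume "\<forall>T\<subseteq>E. card T = k \<longrightarrow> (P T \<longleftrightarrow> Q T)"
  moreover have "card (set xs) = length xs" if "sorted_wrt (<) xs" for xs :: "'b list"
    using that by (simp add: distinct_card strict_sorted_iff)
  ultimately show "{xs. length xs = k \<and> sorted_wrt (<) xs \<and> set xs \<subseteq> E \<and> P (set xs)} =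
      {xs. length xs = k \<and> sorted_wrt (<) xs \<and> set xs \<subseteq> E \<and> Q (set xs)}"
    by auto
qed

lemma Iset_eq_iff_spanning_eq:
  fixes a a' :: "nat \<Rightarrow> 'a::field ^ 'n"
  shows "Iset n a c = Iset n a' c' \<longleftrightarrow>
    (\<forall>T\<subseteq>{1..n+1}. card T = CARD('n option) \<longrightarrow>
      (vec.span (cone_normal n a c ` T) = UNIV \<longleftrightarrow> vec.span (cone_normal n a' c' ` T) = UNIV))"
proof -
  have "CARD('n option) = CARD('n) + 1" by (simp add: card_UNIV_option)
  then show ?thesis
    unfolding Iset_def by (subst sorted_lists_eq_iff) (auto simp: proj_meet_iff_not_spanning)
qed

lemma essential_spanning:
  assumes "essential n a c"
  shows "vec.span (cone_normal n a c ` {1..n+1}) = UNIV"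
proof (rule ccontr)
  assume "vec.span (cone_normal n a c ` {1..n+1}) \<noteq> UNIV"
  then obtain v where "v \<notin> vec.span (cone_normal n a c ` {1..n+1})" by auto
  then obtain z where z: "\<forall>i\<in>{1..n+1}. dotp (cone_normal n a c i) z = 0" "dotp v z \<noteq> 0"
    by (auto elim: exists_separating_dotp)
  obtain x t where xt: "z = homog x t" by (rule homog_cases)
  have "t = 0" using z(1)[rule_format, of "n + 1"] by (simp add: xt dotp_cone_normal)
  moreover have "z \<noteq> 0" using z(2) by auto
  ultimately have "x \<noteq> 0" using xt by auto
  have x_dir: "dotp (a i) x = 0" if "i \<in> {1..n}" for i
    using z(1)[rule_format, of i] that by (simp add: xt \<open>t = 0\<close> dotp_cone_normal)
  obtain B p where B: "B \<subseteq> {1..n}" "isect a c B = {p}"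
    using assms by (auto simp: essential_def LA_def)
  have "dotp (a i) (p + x) = c i" if "i \<in> B" for i
  proof -
    have "p \<in> isect a c B" using B(2) by simp
    then have "dotp (a i) p = c i" using that by (simp add: isect_def hyp_def)
    then show ?thesis using x_dir[of i] that B(1) by (auto simp: dotp_add_right)
  qed
  then have "p + x \<in> isect a c B" by (simp add: isect_def hyp_def)
  then show False using B(2) \<open>x \<noteq> 0\<close> by auto
qed

text \<open>The correspondence is labelled.\<close>

theorem theorem3p4:
  fixes n :: nat
    and a a' :: "nat \<Rightarrow> 'a::field ^ 'n"
    and c c' :: "nat \<Rightarrow> 'a"
  assumes "arrangement n a c" and "essential n a c"
    and "arrangement n a' c'" and "essential n a' c'"
  shows "Iset n a c = Iset n a' c' \<longleftrightarrow> same_lattice n a c a' c'"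
proof -
  let ?w = "cone_normal n a c" and ?w' = "cone_normal n a' c'"
  have E: "{1..n+1} - {n + 1} = {1..n}" by auto
  have "Iset n a c = Iset n a' c' \<longleftrightarrow>
      (\<forall>T\<subseteq>{1..n+1}. card T = CARD('n option) \<longrightarrow>
        (vec.span (?w ` T) = UNIV \<longleftrightarrow> vec.span (?w' ` T) = UNIV))"
    by (rule Iset_eq_iff_spanning_eq)
  also have "\<dots> \<longleftrightarrow>
      (\<forall>B\<subseteq>{1..n}. \<forall>j\<in>{1..n+1}. entails ?w (n + 1) B j \<longleftrightarrow> entails ?w' (n + 1) B j)"
    unfolding E[symmetric]
    using essential_spanning[OF assms(2)] essential_spanning[OF assms(4)]
      cone_normal_infinity_neq_0[of n a c] cone_normal_infinity_neq_0[of n a' c']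
    by (intro spanning_eq_iff_entails_eq) simp_all
  also have "\<dots> \<longleftrightarrow> same_lattice n a c a' c'"
    by (rule same_lattice_iff_entails_eq[symmetric])
  finally show ?thesis .
qed

end
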